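(* Let $q$ be a prime power and let $f(X)\in\mathbb{F}_q[X]$ be separable and exceptional over $\mathbb{F}_q$. Then: $\deg(f)\ne 2$; if $\deg(f)=3$ then $f(X)$ has at most one critical value; and if $\deg(f)=4$ then $q$ is even and $f(X)$ has no critical values.
   Context: $f(X)$ is separable if $f'(X)\neq 0$. $f(X)$ is exceptional over $\mathbb{F}_q$ if the only polynomials in $\mathbb{F}_q[X,Y]$ which divide $f(X)-f(Y)$ and are irreducible in $\overline{\mathbb{F}}_q[X,Y]$ are $c\cdot(X-Y)$ with $c\in\mathbb{F}_q^*$. A critical value of $f$ is $f(c)$ for some $c\in\overline{\mathbb{F}}_q$ with $f'(c)=0$. *)

theory Defs
  imports "HOL-Computational_Algebra.Polynomial" "HOL-Algebra.Algebraic_Closure_Type"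
begin

text \<open>Bivariate polynomials in F[X,Y] are represented as elements of ('a poly) poly:
  the inner variable is X, the outer variable is Y.\<close>

definition fX_minus_fY :: "'a::comm_ring_1 poly \<Rightarrow> 'a poly poly" where
  "fX_minus_fY f = [:f:] - map_poly (\<lambda>c. [:c:]) f"

definition X_minus_Y :: "'a::comm_ring_1 poly poly" where
  "X_minus_Y = [:[:0, 1:], [:-1:]:]"

definition separable_poly :: "'a::field poly \<Rightarrow> bool" where
  "separable_poly f \<longleftrightarrow> pderiv f \<noteq> 0"

definition exceptional :: "'a::field poly \<Rightarrow> bool" where
  "exceptional f \<longleftrightarrow>
     (\<forall>h :: 'a poly poly. h dvd fX_minus_fY f \<and> irreducible (map_poly (map_poly to_ac) h)
        \<longrightarrow> (\<exists>c. c \<noteq> 0 \<and> h = smult [:c:] X_minus_Y))"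

definition critical_values :: "'a::field poly \<Rightarrow> 'a alg_closure set" where
  "critical_values f =
     {poly (map_poly to_ac f) c | c. poly (pderiv (map_poly to_ac f)) c = 0}"

end

theory Submission
  imports Defs
begin

text \<open>
  Write \<open>f(X) - f(Y) = (X - Y) G(X, Y)\<close>. A factor \<open>Y - \<tau>(X)\<close> with \<open>\<tau>\<close> over \<open>\<bbbF>\<^sub>q\<close>
  is absolutely irreducible, so exceptionality allows only \<open>\<tau> = X\<close>; for \<open>deg f = 2\<close> the
  reflection \<open>\<tau> = -f\<^sub>1/f\<^sub>2 - X\<close> gives such a factor, and \<open>\<tau> = X\<close> forces \<open>f' = 0\<close>.
  For \<open>deg f \<in> {3, 4}\<close>, \<open>G\<close> has degree 2 or 3 in \<open>Y\<close> and is reducible over the algebraic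
  closure, hence has a root \<open>Y = \<sigma>(X)\<close> there; \<open>\<sigma> \<noteq> X\<close> because \<open>G(X, X) = f'(X) \<noteq> 0\<close>.
  From \<open>f(\<sigma>) = f\<close>, \<open>\<sigma>\<close> is affine, \<open>\<sigma>(X) = c + u (X - c)\<close> with \<open>u\<^sup>n = 1\<close> and \<open>c\<close> the
  mean of the roots of \<open>f\<close> (if \<open>n \<noteq> 0\<close> in \<open>\<bbbF>\<^sub>q\<close>).
  For a cubic, \<open>c\<close> is then a double root of \<open>f'\<close> (or \<open>f'\<close> is linear in characteristic 3), so
  \<open>f\<close> has a single critical point. For a quartic in odd characteristic, \<open>\<sigma>\<close> or \<open>\<sigma>\<^sup>2\<close> is
  the reflection \<open>2c - X\<close>, which is defined over \<open>\<bbbF>\<^sub>q\<close> and so excluded; in characteristic 2,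
  \<open>\<sigma>\<close> is a translation, which forces \<open>f'\<close> to be a nonzero constant.
\<close>

lemma map_poly_hom_add:
  assumes "\<And>x y. h (x + y) = h x + h y" "h 0 = 0"
  shows "map_poly h (p + q) = map_poly h p + map_poly h q"
  by (rule poly_eqI) (simp add: coeff_map_poly assms)

lemma map_poly_hom_mult:
  fixes h :: "'b::comm_semiring_1 \<Rightarrow> 'c::comm_semiring_1"
  assumes "\<And>x y. h (x + y) = h x + h y" "\<And>x y. h (x * y) = h x * h y" "h 0 = 0"
  shows "map_poly h (p * q) = map_poly h p * map_poly h q"
  by (induction p) (simp_all add: map_poly_pCons map_poly_hom_add map_poly_smult assms)

lemma map_poly_to_ac_add [simp]: "map_poly to_ac (p + q) = map_poly to_ac p + map_poly to_ac q"
  by (rule map_poly_hom_add) simp_all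

lemma map_poly_to_ac_diff [simp]: "map_poly to_ac (p - q) = map_poly to_ac p - map_poly to_ac q"
  by (rule poly_eqI) (simp add: coeff_map_poly)

lemma map_poly_to_ac_mult [simp]: "map_poly to_ac (p * q) = map_poly to_ac p * map_poly to_ac q"
  by (rule map_poly_hom_mult) simp_all

lemma map_poly_to_ac_pCons [simp]: "map_poly to_ac (pCons c p) = pCons (to_ac c) (map_poly to_ac p)"
  by (simp add: map_poly_pCons)

lemma map_poly_to_ac_eq_iff [simp]: "map_poly to_ac p = map_poly to_ac q \<longleftrightarrow> p = q"
  by (metis coeff_map_poly poly_eqI to_ac_0 to_ac_eq_iff)

lemma map_poly_to_ac_eq_0_iff [simp]: "map_poly to_ac p = 0 \<longleftrightarrow> p = 0"
  using map_poly_to_ac_eq_iff [of p 0] by simp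

lemma map_poly_to_ac_pderiv: "map_poly to_ac (pderiv p) = pderiv (map_poly to_ac p)"
  by (rule poly_eqI) (simp add: coeff_pderiv coeff_map_poly)

lemma degree_map_poly_to_ac [simp]: "degree (map_poly to_ac p) = degree p"
  by (simp add: degree_map_poly)

lemma separable_poly_imp_pderiv_map_poly_to_ac_neq_0:
  "separable_poly f \<Longrightarrow> pderiv (map_poly to_ac f) \<noteq> 0"
  by (simp add: separable_poly_def flip: map_poly_to_ac_pderiv)

lemma map_poly_to_ac_pcompose:
  "map_poly to_ac (pcompose p q) = pcompose (map_poly to_ac p) (map_poly to_ac q)"
  by (induction p) (simp_all add: pcompose_pCons)

lemma map_poly_map_poly_to_ac_mult:
  "map_poly (map_poly to_ac) (P * Q) = map_poly (map_poly to_ac) P * map_poly (map_poly to_ac) Q"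
  by (rule map_poly_hom_mult) simp_all

lemma numeral_alg_closure_eq_0_iff:
  "(numeral k :: 'a::field alg_closure) = 0 \<longleftrightarrow> (numeral k :: 'a) = 0"
  using to_ac_eq_0_iff [of "numeral k :: 'a"] by (simp only: to_ac_numeral)

lemma irreducible_linear_monic_poly:
  fixes c :: "'b::idom"
  shows "irreducible [:c, 1:]"
proof (rule irreducibleI)
  fix p q assume pq: "[:c, 1:] = p * q"
  then have "p \<noteq> 0" "q \<noteq> 0"
    by auto
  moreover have "degree (p * q) = 1"
    by (simp flip: pq)
  ultimately have deg: "degree p + degree q = 1"
    by (simp add: degree_mult_eq)
  have lc: "lead_coeff p * lead_coeff q = 1"
    by (metis lead_coeff_mult pq lead_coeff_pCons(1) lead_coeff_1 one_neq_zero pCons_one)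
  show "p dvd 1 \<or> q dvd 1"
  proof (cases "degree p = 0")
    case True
    then have "p = [:lead_coeff p:]"
      using degree_0_id [of p] by simp
    moreover have "lead_coeff p dvd 1"
      using lc by (rule dvdI [OF sym])
    ultimately show ?thesis
      by (metis is_unit_const_poly_iff)
  next
    case False
    then have "degree q = 0"
      using deg by simp
    then have "q = [:lead_coeff q:]"
      using degree_0_id [of q] by simp
    moreover have "lead_coeff q dvd 1"
      using lc by (metis dvdI mult.commute)
    ultimately show ?thesis
      by (metis is_unit_const_poly_iff)
  qed
qed (auto simp: is_unit_poly_iff)

lemma degree_one_has_root:
  fixes A :: "'r::comm_ring_1 poly"
  assumes "degree A = 1" and "lead_coeff A dvd 1"
  shows "\<exists>x. poly A x = 0"
proof -
  obtain a b where A: "A = [:b, a:]"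
    using assms(1) by (elim degree1_coeffs)
  obtain w where "a * w = 1"
    using assms A by (auto elim: dvdE)
  have "poly A (- b * w) = b - b * (a * w)"
    by (simp add: A algebra_simps)
  then show ?thesis
    using \<open>a * w = 1\<close> by auto
qed

lemma not_irreducible_low_degree_has_root:
  fixes G :: "'r::idom poly"
  assumes "\<not> irreducible G" and "lead_coeff G dvd 1"
    and "2 \<le> degree G" and "degree G \<le> 3"
  shows "\<exists>x. poly G x = 0"
proof -
  have "G \<noteq> 0" "\<not> G dvd 1"
    using assms(3) by (auto simp: is_unit_poly_iff)
  then obtain A B where AB: "G = A * B" "\<not> A dvd 1" "\<not> B dvd 1"
    using assms(1) unfolding irreducible_def by blast
  then have "A \<noteq> 0" "B \<noteq> 0"
    using \<open>G \<noteq> 0\<close> by auto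
  have "lead_coeff A * lead_coeff B dvd 1"
    using assms(2) by (simp add: AB(1) lead_coeff_mult)
  then have units: "lead_coeff A dvd 1" "lead_coeff B dvd 1"
    using dvd_mult_left dvd_mult_right by blast+
  have "degree P \<noteq> 0" if "lead_coeff P dvd 1" "\<not> P dvd 1" for P :: "'r poly"
  proof
    assume "degree P = 0"
    then have "P = [:lead_coeff P:]"
      using degree_0_id [of P] by simp
    then show False
      using that by (metis is_unit_const_poly_iff)
  qed
  then have "degree A \<noteq> 0" "degree B \<noteq> 0"
    using AB units by blast+
  moreover have "degree A + degree B = degree G"
    using AB(1) \<open>A \<noteq> 0\<close> \<open>B \<noteq> 0\<close> by (simp add: degree_mult_eq)
  ultimately have "degree A = 1 \<or> degree B = 1"
    using assms(4) by linarith
  then obtain x where "poly A x = 0 \<or> poly B x = 0"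
    using degree_one_has_root units by blast
  then show ?thesis
    by (auto simp: AB(1))
qed

lemma poly_roots_unique_if_degree_le_1:
  fixes p :: "'b::idom poly"
  assumes "p \<noteq> 0" and "degree p \<le> 1" and "poly p x = 0" and "poly p y = 0"
  shows "x = y"
proof -
  have "card {x. poly p x = 0} \<le> Suc 0"
    using card_poly_roots_bound [OF assms(1)] assms(2) by simp
  then show ?thesis
    using card_le_Suc0_iff_eq [OF poly_roots_finite [OF assms(1)]] assms(3,4) by blast
qed

lemma degree_le_4_poly_eq:
  assumes "degree p \<le> 4"
  shows "p = [:coeff p 0, coeff p 1, coeff p 2, coeff p 3, coeff p 4:]"
  using assms by (intro poly_eqI) (auto simp: coeff_pCons coeff_eq_0 eval_nat_numeral split: nat.split)

lemma pderiv_degree_le_4: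
  fixes p :: "'b::idom poly"
  assumes "degree p \<le> 4"
  shows "pderiv p = [:coeff p 1, 2 * coeff p 2, 3 * coeff p 3, 4 * coeff p 4:]"
  by (subst degree_le_4_poly_eq [OF assms]) (simp add: pderiv_pCons algebra_simps)

lemma poly_quadratic_taylor:
  fixes a0 a1 a2 :: "'b::idom"
  shows "poly [:a0, a1, a2:] x
    = poly [:a0, a1, a2:] c + poly (pderiv [:a0, a1, a2:]) c * (x - c) + a2 * (x - c) ^ 2"
  by (simp add: pderiv_pCons algebra_simps power2_eq_square)

lemma even_card_if_two_eq_0:
  assumes "(2 :: 'a::{ring_1, finite}) = 0"
  shows "even (card (UNIV :: 'a set))"
proof -
  have "(\<Sum>x\<in>UNIV. x + 1) = (\<Sum>x\<in>UNIV. (x :: 'a))"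
    by (rule sum.reindex_bij_witness [of _ "\<lambda>x. x - 1" "\<lambda>x. x + 1"]) auto
  then have card_0: "of_nat (card (UNIV :: 'a set)) = (0 :: 'a)"
    by (simp add: sum.distrib)
  show ?thesis
  proof (rule ccontr)
    assume "odd (card (UNIV :: 'a set))"
    then obtain k where "card (UNIV :: 'a set) = 2 * k + 1"
      by (elim oddE)
    then have "(1 :: 'a) = 0"
      using card_0 assms by simp
    then show False
      by simp
  qed
qed

section \<open>Affine symmetries of polynomials\<close>

lemma pcompose_eq_self_imp_linear:
  fixes p q :: "'b::idom poly"
  assumes comp: "pcompose p q = p" and deg: "degree p \<noteq> 0"
  obtains u v where "q = [:v, u:]" and "u \<noteq> 0"
proof -
  have "degree (pcompose p q) = degree p * degree q"
    by (rule degree_pcompose)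
  then have "degree p * degree q = degree p * 1"
    by (metis comp mult.right_neutral)
  then have "degree q = 1"
    using deg by auto
  then show thesis
    using that by (elim degree1_coeffs) blast
qed

lemma coeff_pcompose_linear_top:
  fixes f :: "'b::comm_semiring_1 poly"
  assumes "degree f = Suc m"
  shows "coeff (pcompose f [:v, u:]) (Suc m) = u ^ Suc m * lead_coeff f
    \<and> coeff (pcompose f [:v, u:]) m = u ^ m * (coeff f m + of_nat (Suc m) * lead_coeff f * v)"
  using assms
proof (induction f arbitrary: m)
  case 0
  then show ?case
    by simp
next
  case (pCons a g)
  define h where "h = pcompose g [:v, u:]"
  have g: "g \<noteq> 0" "degree g = m"
    using pCons.prems by (auto split: if_splits)
  have "degree h \<le> degree g * degree [:v, u:]"
    unfolding h_def by (rule degree_pcompose_le)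
  also have "\<dots> \<le> m"
    using g mult_le_mono2 [of "degree [:v, u:]" 1 m] by simp
  finally have h_above: "coeff h (Suc m) = 0"
    by (simp add: coeff_eq_0)
  have comp: "pcompose (pCons a g) [:v, u:] = [:a:] + smult v h + pCons 0 (smult u h)"
    by (simp add: pcompose_pCons h_def add.assoc)
  show ?case
  proof (cases m)
    case 0
    then have "degree g = 0"
      using g by simp
    then obtain b where "g = [:b:]"
      by (elim degree_eq_zeroE)
    moreover from this have "h = [:b:]" "b \<noteq> 0"
      using g by (simp_all add: h_def)
    ultimately show ?thesis
      unfolding comp using 0 by (simp add: algebra_simps)
  next
    case (Suc k)
    with pCons.IH g have IH: "coeff h (Suc k) = u ^ Suc k * lead_coeff g"
        "coeff h k = u ^ k * (coeff g k + of_nat (Suc k) * lead_coeff g * v)"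
      by (simp_all add: h_def)
    show ?thesis
      using Suc g h_above IH by (simp add: comp algebra_simps)
  qed
qed

lemma pcompose_linear_eq_self_imp_root_of_unity:
  fixes f :: "'b::idom poly"
  assumes "pcompose f [:v, u:] = f" and "degree f \<noteq> 0"
  shows "u ^ degree f = 1"
proof -
  obtain m where m: "degree f = Suc m"
    using assms(2) not0_implies_Suc by blast
  then have "lead_coeff f = u ^ degree f * lead_coeff f"
    using coeff_pcompose_linear_top [OF m, of v u] assms(1) by simp
  moreover have "lead_coeff f \<noteq> 0"
    using assms(2) by auto
  ultimately show ?thesis
    by (metis mult_cancel_right2)
qed

text \<open>The mean of the roots of \<open>f\<close>, counted with multiplicity in a splitting field.\<close>
definition root_mean :: "'b::field poly \<Rightarrow> 'b" where
  "root_mean f = - coeff f (degree f - 1) / (of_nat (degree f) * lead_coeff f)"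

text \<open>An affine substitution fixing \<open>f\<close> permutes its roots, hence fixes their mean.\<close>
lemma pcompose_linear_eq_self_fixes_root_mean:
  fixes f :: "'b::field poly"
  assumes "pcompose f [:v, u:] = f" and "of_nat (degree f) \<noteq> (0 :: 'b)"
  shows "v = root_mean f - u * root_mean f"
proof -
  have "degree f \<noteq> 0"
    using assms(2) by (metis of_nat_0)
  then obtain m where m: "degree f = Suc m"
    using not0_implies_Suc by blast
  define a b where "a = lead_coeff f" and "b = coeff f m"
  have "a \<noteq> 0"
    using \<open>degree f \<noteq> 0\<close> by (auto simp: a_def)
  have coeff_m: "u ^ m * (b + of_nat (Suc m) * a * v) = b"
    using coeff_pcompose_linear_top [OF m, of v u] assms(1) by (simp add: a_def b_def)
  have "u ^ Suc m = 1"
    using pcompose_linear_eq_self_imp_root_of_unity [OF assms(1) \<open>degree f \<noteq> 0\<close>] m by simp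
  then have "b + of_nat (Suc m) * a * v = u ^ Suc m * (b + of_nat (Suc m) * a * v)"
    by simp
  also have "\<dots> = u * b"
    using coeff_m by (simp only: power_Suc mult.assoc)
  finally have "b + of_nat (Suc m) * a * v = u * b" .
  moreover have "of_nat (Suc m) * a \<noteq> 0"
    using assms(2) m \<open>a \<noteq> 0\<close> by simp
  ultimately have "v = (u * b - b) / (of_nat (Suc m) * a)"
    by (simp add: eq_divide_eq algebra_simps)
  moreover have "root_mean f = - b / (of_nat (Suc m) * a)"
    by (simp add: root_mean_def m a_def b_def)
  ultimately show ?thesis
    by (simp add: diff_divide_distrib)
qed

lemma pcompose_rotation_rotation:
  fixes c u w :: "'b::comm_ring_1"
  shows "pcompose [:c - u * c, u:] [:c - w * c, w:] = [:c - u * w * c, u * w:]"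
  by (simp add: pcompose_pCons algebra_simps)

lemma pderiv_pcompose_linear:
  "pderiv (pcompose p [:v, u:]) = smult u (pcompose (pderiv p) [:v, u:])"
  by (simp add: pderiv_pcompose pderiv_pCons)

lemma pcompose_quadratic_reflection:
  fixes f :: "'b::field poly"
  assumes "degree f = 2"
  shows "pcompose f [:- coeff f 1 / coeff f 2, -1:] = f"
proof -
  define a0 a1 a2 where "a0 = coeff f 0" and "a1 = coeff f 1" and "a2 = coeff f 2"
  have f: "f = [:a0, a1, a2:]"
    using degree_le_4_poly_eq [of f] assms by (simp add: a0_def a1_def a2_def coeff_eq_0)
  have "a2 \<noteq> 0"
    using assms leading_coeff_0_iff [of f] by (auto simp: a2_def)
  then show ?thesis
    unfolding a1_def [symmetric] a2_def [symmetric] unfolding f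
    by (simp add: pcompose_pCons field_simps power2_eq_square)
qed

text \<open>The symmetry is \<open>c + u (X - c)\<close> with \<open>c\<close> the mean of the roots and \<open>u\<^sup>3 = 1 \<noteq> u\<close>;
  by the chain rule \<open>F'(c) = u F'(c)\<close> and \<open>F''(c) = u\<^sup>2 F''(c)\<close>, so \<open>c\<close> is a double root of
  \<open>F'\<close>.\<close>
lemma cubic_nontrivial_pcompose_eq_self_pderiv:
  fixes F :: "'b::field poly"
  assumes "degree F = 3" and "(3 :: 'b) \<noteq> 0"
    and "pcompose F \<sigma> = F" and "\<sigma> \<noteq> [:0, 1:]"
  shows "poly (pderiv F) x = 3 * lead_coeff F * (x - root_mean F) ^ 2"
proof -
  define c where "c = root_mean F"
  obtain u v where \<sigma>: "\<sigma> = [:v, u:]"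
    using pcompose_eq_self_imp_linear [OF assms(3)] assms(1) by (metis zero_neq_numeral)
  have "v = c - u * c"
    using pcompose_linear_eq_self_fixes_root_mean [of F v u] assms(1-3) by (simp add: \<sigma> c_def)
  have "u ^ 3 = 1"
    using pcompose_linear_eq_self_imp_root_of_unity [of F v u] assms(1,3) by (simp add: \<sigma>)
  have "u \<noteq> 1"
    using assms(4) \<open>v = c - u * c\<close> by (auto simp: \<sigma>)
  have "u ^ 2 \<noteq> 1"
    using \<open>u ^ 3 = 1\<close> \<open>u \<noteq> 1\<close> by (metis power_Suc numeral_3_eq_3 numeral_2_eq_2 mult_1_right)
  have fix_c: "poly \<sigma> c = c"
    by (simp add: \<sigma> \<open>v = c - u * c\<close>)
  have d1: "pderiv F = smult u (pcompose (pderiv F) \<sigma>)"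
    using pderiv_pcompose_linear [of F v u] assms(3) by (simp add: \<sigma>)
  then have d2: "pderiv (pderiv F) = smult (u ^ 2) (pcompose (pderiv (pderiv F)) \<sigma>)"
    by (metis \<sigma> pderiv_smult pderiv_pcompose_linear smult_smult power2_eq_square)
  have "poly (pderiv F) c = u * poly (pderiv F) c"
    using arg_cong [OF d1, of "\<lambda>p. poly p c"] by (simp add: poly_pcompose fix_c)
  then have crit: "poly (pderiv F) c = 0"
    using \<open>u \<noteq> 1\<close> by (metis mult_cancel_right1)
  have "poly (pderiv (pderiv F)) c = u ^ 2 * poly (pderiv (pderiv F)) c"
    using arg_cong [OF d2, of "\<lambda>p. poly p c"] by (simp add: poly_pcompose fix_c)
  then have infl: "poly (pderiv (pderiv F)) c = 0"
    using \<open>u ^ 2 \<noteq> 1\<close> by (metis mult_cancel_right1)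
  have F': "pderiv F = [:coeff F 1, 2 * coeff F 2, 3 * lead_coeff F:]"
    using pderiv_degree_le_4 [of F] assms(1) by (simp add: coeff_eq_0)
  show ?thesis
    using poly_quadratic_taylor [of "coeff F 1" "2 * coeff F 2" "3 * lead_coeff F" x c] crit infl
    by (simp add: F' c_def)
qed

text \<open>If \<open>2 \<noteq> 0\<close>, a nontrivial affine symmetry of a quartic is a rotation of order 2 or 4
  about the mean of its roots, and its square or itself is the reflection about the mean.\<close>
lemma quartic_nontrivial_pcompose_eq_self_reflection:
  fixes F :: "'b::field poly"
  assumes "degree F = 4" and "(2 :: 'b) \<noteq> 0"
    and "pcompose F \<sigma> = F" and "\<sigma> \<noteq> [:0, 1:]"
  shows "pcompose F [:2 * root_mean F, -1:] = F"
proof -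
  define c where "c = root_mean F"
  obtain u v where \<sigma>: "\<sigma> = [:v, u:]"
    using pcompose_eq_self_imp_linear [OF assms(3)] assms(1) by (metis zero_neq_numeral)
  have "(4 :: 'b) = 2 * 2"
    by simp
  then have "(4 :: 'b) \<noteq> 0"
    using assms(2) by (metis mult_eq_0_iff)
  then have "v = c - u * c"
    using pcompose_linear_eq_self_fixes_root_mean [of F v u] assms(1-3) by (simp add: \<sigma> c_def)
  then have \<sigma>_rot: "\<sigma> = [:c - u * c, u:]" and "u \<noteq> 1"
    using assms(4) by (auto simp: \<sigma>)
  have "u ^ 4 = 1"
    using pcompose_linear_eq_self_imp_root_of_unity [of F v u] assms(1,3) by (simp add: \<sigma>)
  then have "(u - 1) * ((u + 1) * (u ^ 2 + 1)) = 0"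
    by (simp add: algebra_simps power2_eq_square power4_eq_xxxx)
  then have "u + 1 = 0 \<or> u ^ 2 + 1 = 0"
    using \<open>u \<noteq> 1\<close> by simp
  then have "u = -1 \<or> u ^ 2 = -1"
    by (simp only: eq_neg_iff_add_eq_0)
  then have "\<sigma> = [:2 * c, -1:] \<or> pcompose \<sigma> \<sigma> = [:2 * c, -1:]"
  proof
    assume "u = -1"
    then show ?thesis
      by (intro disjI1) (simp add: \<sigma>_rot)
  next
    assume "u ^ 2 = -1"
    then have "u * u = -1"
      by (simp only: power2_eq_square)
    then show ?thesis
      by (intro disjI2) (simp add: \<sigma>_rot pcompose_rotation_rotation)
  qed
  moreover have "pcompose F (pcompose \<sigma> \<sigma>) = F"
    by (simp add: pcompose_assoc assms(3))
  ultimately show ?thesis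
    using assms(3) unfolding c_def by auto
qed

text \<open>In characteristic 2 the symmetry must be a translation \<open>X + v\<close>, \<open>v \<noteq> 0\<close>; as
  \<open>F' = F\<^sub>1 + F\<^sub>3 X\<^sup>2\<close> this forces \<open>F\<^sub>3 = 0\<close>.\<close>
lemma quartic_char_2_nontrivial_pcompose_eq_self_pderiv_const:
  fixes F :: "'b::field poly"
  assumes "degree F = 4" and "(2 :: 'b) = 0"
    and "pcompose F \<sigma> = F" and "\<sigma> \<noteq> [:0, 1:]"
  shows "pderiv F = [:coeff F 1:]"
proof -
  obtain u v where \<sigma>: "\<sigma> = [:v, u:]"
    using pcompose_eq_self_imp_linear [OF assms(3)] assms(1) by (metis zero_neq_numeral)
  have "u ^ 4 = 1"
    using pcompose_linear_eq_self_imp_root_of_unity [of F v u] assms(1,3) by (simp add: \<sigma>)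
  have "(u - 1) ^ 4 = (u ^ 4 + 1) - 2 * (2 * u ^ 3 - 3 * u ^ 2 + 2 * u)"
    by (simp add: algebra_simps power2_eq_square power3_eq_cube power4_eq_xxxx)
  also have "\<dots> = 0"
    using \<open>u ^ 4 = 1\<close> assms(2) by simp
  finally have "u = 1"
    by simp
  then have "v \<noteq> 0"
    using assms(4) by (auto simp: \<sigma>)
  have "(3 :: 'b) = 2 + 1"
    by simp
  also have "\<dots> = 1"
    by (simp only: assms(2) add_0_left)
  finally have three: "(3 :: 'b) = 1" .
  have "(4 :: 'b) = 2 * 2"
    by simp
  also have "\<dots> = 0"
    by (simp only: assms(2) mult_zero_left)
  finally have four: "(4 :: 'b) = 0" .
  have F': "pderiv F = [:coeff F 1, 0, coeff F 3:]"
    using pderiv_degree_le_4 [of F] assms by (simp add: three four)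
  have "pderiv F = pcompose (pderiv F) \<sigma>"
    using pderiv_pcompose_linear [of F v u] assms(3) \<open>u = 1\<close> by (simp add: \<sigma>)
  then have "poly (pderiv F) 0 = poly (pcompose (pderiv F) \<sigma>) 0"
    by (rule arg_cong)
  also have "\<dots> = poly (pderiv F) v"
    by (simp add: poly_pcompose \<sigma>)
  finally have "poly (pderiv F) 0 = poly (pderiv F) v" .
  then have "coeff F 3 * v ^ 2 = 0"
    by (auto simp: F' power2_eq_square)
  then show ?thesis
    using F' \<open>v \<noteq> 0\<close> by simp
qed

section \<open>The polynomial \<open>f(X) - f(Y)\<close>\<close>

lemma coeff_fX_minus_fY: "coeff (fX_minus_fY f) k = (if k = 0 then f else 0) - [:coeff f k:]"
  by (auto simp add: fX_minus_fY_def coeff_map_poly coeff_pCons split: nat.splits)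

lemma poly_fX_minus_fY: "poly (fX_minus_fY f) \<phi> = f - pcompose f \<phi>"
  by (simp add: fX_minus_fY_def pcompose_altdef)

lemma map_poly_map_poly_to_ac_fX_minus_fY:
  "map_poly (map_poly to_ac) (fX_minus_fY f) = fX_minus_fY (map_poly to_ac f)"
  by (rule poly_eqI) (simp add: coeff_map_poly coeff_fX_minus_fY)

lemma map_poly_map_poly_to_ac_X_minus_Y: "map_poly (map_poly to_ac) X_minus_Y = X_minus_Y"
  by (simp add: X_minus_Y_def map_poly_pCons)

lemma X_minus_Y_dvd_fX_minus_fY: "X_minus_Y dvd fX_minus_fY f"
proof -
  have "poly (fX_minus_fY f) [:0, 1:] = 0"
    by (simp add: poly_fX_minus_fY)
  then have "[:- [:0, 1:], 1:] dvd fX_minus_fY f"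
    by (simp only: poly_eq_0_iff_dvd)
  moreover have "X_minus_Y = - [:- [:0, 1:], 1:]"
    by (simp add: X_minus_Y_def one_pCons)
  ultimately show ?thesis
    by (metis minus_dvd_iff)
qed

lemma degree_fX_minus_fY: "degree (fX_minus_fY f) = degree f"
proof (cases "degree f = 0")
  case True
  then obtain c where "f = [:c:]"
    by (elim degree_eq_zeroE)
  then have "fX_minus_fY f = 0"
    by (intro poly_eqI) (simp add: coeff_fX_minus_fY coeff_pCons split: nat.split)
  then show ?thesis
    using True by simp
next
  case False
  show ?thesis
  proof (rule antisym)
    show "degree (fX_minus_fY f) \<le> degree f"
      by (rule degree_le) (auto simp: coeff_fX_minus_fY coeff_eq_0)
    show "degree f \<le> degree (fX_minus_fY f)"
      using False by (intro le_degree) (auto simp: coeff_fX_minus_fY)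
  qed
qed

lemma lead_coeff_fX_minus_fY:
  "degree f \<noteq> 0 \<Longrightarrow> lead_coeff (fX_minus_fY f) = - [:lead_coeff f:]"
  by (simp add: degree_fX_minus_fY coeff_fX_minus_fY)

lemma cofactor_fX_minus_fY:
  fixes f :: "'b::idom poly"
  assumes G: "fX_minus_fY f = X_minus_Y * G" and deg: "degree f \<noteq> 0"
  shows "degree G = degree f - 1" and "lead_coeff G = [:lead_coeff f:]"
proof -
  have XY: "X_minus_Y \<noteq> (0 :: 'b poly poly)" "degree (X_minus_Y :: 'b poly poly) = 1"
    and lc: "lead_coeff (X_minus_Y :: 'b poly poly) = - 1"
    by (simp_all add: X_minus_Y_def one_pCons)
  have "G \<noteq> 0"
    using G deg degree_fX_minus_fY [of f] by auto
  have "degree f = degree (X_minus_Y * G)"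
    using G degree_fX_minus_fY [of f] by simp
  also have "\<dots> = 1 + degree G"
    using XY \<open>G \<noteq> 0\<close> by (simp add: degree_mult_eq)
  finally show "degree G = degree f - 1"
    by simp
  have "- lead_coeff G = - [:lead_coeff f:]"
    using arg_cong [OF G, of lead_coeff] deg by (simp add: lead_coeff_fX_minus_fY lead_coeff_mult lc)
  then show "lead_coeff G = [:lead_coeff f:]"
    by (metis neg_equal_iff_equal)
qed

lemma pderiv_map_poly_const:
  "pderiv (map_poly (\<lambda>c. [:c:]) p) = map_poly (\<lambda>c. [:c:]) (pderiv p)"
  by (rule poly_eqI) (simp add: coeff_pderiv coeff_map_poly of_nat_poly mult.commute)

text \<open>Differentiate \<open>f(X) - f(Y) = (X - Y) G\<close> in \<open>Y\<close> and put \<open>Y = X\<close>.\<close>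
lemma poly_cofactor_fX_minus_fY_diagonal:
  fixes f :: "'b::idom poly"
  assumes "fX_minus_fY f = X_minus_Y * G"
  shows "poly G [:0, 1:] = pderiv f"
proof -
  have "- pderiv f = poly (pderiv (fX_minus_fY f)) [:0, 1:]"
    by (simp add: fX_minus_fY_def pderiv_diff pderiv_pCons pderiv_map_poly_const
        pcompose_altdef [symmetric])
  also have "\<dots> = poly (X_minus_Y * pderiv G + G * pderiv X_minus_Y) [:0, 1:]"
    by (simp only: assms pderiv_mult)
  also have "\<dots> = - poly G [:0, 1:]"
    by (simp add: X_minus_Y_def pderiv_pCons one_pCons)
  finally show ?thesis
    by simp
qed

section \<open>Exceptional polynomials of degree at most 4\<close>

lemma exceptional_pcompose_eq_self:
  assumes "exceptional f" and "pcompose f \<phi> = f"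
  shows "\<phi> = [:0, 1:]"
proof -
  have "poly (fX_minus_fY f) \<phi> = 0"
    by (simp add: poly_fX_minus_fY assms(2))
  then have "[:- \<phi>, 1:] dvd fX_minus_fY f"
    by (simp only: poly_eq_0_iff_dvd)
  moreover have "irreducible (map_poly (map_poly to_ac) [:- \<phi>, 1:])"
    by (simp add: map_poly_pCons irreducible_linear_monic_poly)
  ultimately obtain c where "[:- \<phi>, 1:] = smult [:c:] X_minus_Y"
    using assms(1) unfolding exceptional_def by blast
  then have "- \<phi> = [:0, c:]" and "1 = [:- c:]"
    by (simp_all add: X_minus_Y_def)
  then have "c = -1"
    by (auto simp: one_pCons minus_equation_iff)
  then show ?thesis
    using \<open>- \<phi> = [:0, c:]\<close> by (simp add: minus_equation_iff [of \<phi>])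
qed

lemma exceptional_cofactor_not_irreducible:
  assumes "exceptional f" and G: "fX_minus_fY f = X_minus_Y * G" and "3 \<le> degree f"
  shows "\<not> irreducible (map_poly (map_poly to_ac) G)"
proof
  assume "irreducible (map_poly (map_poly to_ac) G)"
  moreover have "G dvd fX_minus_fY f"
    using G by simp
  ultimately obtain c where "c \<noteq> 0" "G = smult [:c:] X_minus_Y"
    using assms(1) unfolding exceptional_def by blast
  then have "degree G = 1"
    by (simp add: X_minus_Y_def)
  moreover have "degree G = degree f - 1"
    using cofactor_fX_minus_fY(1) [OF G] assms(3) by simp
  ultimately show False
    using assms(3) by simp
qed

lemma exceptional_nontrivial_pcompose_eq_self:
  fixes f :: "'a::field poly"
  assumes "exceptional f" and "separable_poly f" and "3 \<le> degree f" and "degree f \<le> 4"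
  obtains \<phi> where "pcompose (map_poly to_ac f) \<phi> = map_poly to_ac f" and "\<phi> \<noteq> [:0, 1:]"
proof -
  define F where "F = map_poly to_ac f"
  obtain G where G: "fX_minus_fY f = X_minus_Y * G"
    using X_minus_Y_dvd_fX_minus_fY [of f] by (elim dvdE)
  define G' where "G' = map_poly (map_poly to_ac) G"
  have G': "fX_minus_fY F = X_minus_Y * G'"
    using arg_cong [OF G, of "map_poly (map_poly to_ac)"]
    by (simp add: F_def G'_def map_poly_map_poly_to_ac_mult map_poly_map_poly_to_ac_fX_minus_fY
        map_poly_map_poly_to_ac_X_minus_Y)
  have F: "degree F = degree f" "lead_coeff F = to_ac (lead_coeff f)" "pderiv F \<noteq> 0"
    using separable_poly_imp_pderiv_map_poly_to_ac_neq_0 [OF assms(2)]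
    by (simp_all add: F_def coeff_map_poly)
  have "f \<noteq> 0"
    using assms(3) by auto
  then have "lead_coeff G' dvd 1"
    using cofactor_fX_minus_fY(2) [OF G'] F assms(3) by (simp add: is_unit_const_poly_iff dvd_field_iff)
  moreover have "\<not> irreducible G'"
    using exceptional_cofactor_not_irreducible [OF assms(1) G] assms(3) by (simp add: G'_def)
  moreover have "2 \<le> degree G'" "degree G' \<le> 3"
    using cofactor_fX_minus_fY(1) [OF G'] F assms(3,4) by simp_all
  ultimately obtain \<phi> where "poly G' \<phi> = 0"
    using not_irreducible_low_degree_has_root by blast
  then have "pcompose F \<phi> = F"
    using poly_fX_minus_fY [of F \<phi>] by (simp add: G')
  moreover have "\<phi> \<noteq> [:0, 1:]"
    using poly_cofactor_fX_minus_fY_diagonal [OF G'] F(3) \<open>poly G' \<phi> = 0\<close> by auto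
  ultimately show thesis
    using that by (simp add: F_def)
qed

lemma exceptional_degree_ne_2:
  fixes f :: "'a::field poly"
  assumes "separable_poly f" and "exceptional f"
  shows "degree f \<noteq> 2"
proof
  assume deg: "degree f = 2"
  then have "coeff f 2 \<noteq> 0"
    using leading_coeff_0_iff [of f] by auto
  have "[:- coeff f 1 / coeff f 2, -1:] = [:0, 1:]"
    using exceptional_pcompose_eq_self [OF assms(2) pcompose_quadratic_reflection [OF deg]] .
  then have "coeff f 1 = 0" and "- 1 = (1 :: 'a)"
    using \<open>coeff f 2 \<noteq> 0\<close> by simp_all
  moreover from \<open>- 1 = (1 :: 'a)\<close> have "(2 :: 'a) = 0"
    by (metis add.left_inverse one_add_one)
  moreover have "pderiv f = [:coeff f 1, 2 * coeff f 2:]"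
    using pderiv_degree_le_4 [of f] deg by (simp add: coeff_eq_0)
  ultimately show False
    using assms(1) by (simp add: separable_poly_def)
qed

lemma exceptional_cubic_unique_critical_point:
  fixes f :: "'a::field poly"
  defines "F \<equiv> map_poly to_ac f"
  assumes "separable_poly f" and "exceptional f" and "degree f = 3"
    and "poly (pderiv F) x = 0" and "poly (pderiv F) y = 0"
  shows "x = y"
proof -
  have deg: "degree F = 3" and "pderiv F \<noteq> 0"
    using separable_poly_imp_pderiv_map_poly_to_ac_neq_0 [OF assms(2)] assms(4) by (simp_all add: F_def)
  obtain \<sigma> where \<sigma>: "pcompose F \<sigma> = F" "\<sigma> \<noteq> [:0, 1:]"
    using exceptional_nontrivial_pcompose_eq_self [OF assms(3,2)] assms(4) by (auto simp: F_def)
  show ?thesis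
  proof (cases "(3 :: 'a alg_closure) = 0")
    case True
    then have "degree (pderiv F) \<le> 1"
      using pderiv_degree_le_4 [of F] deg by (simp add: coeff_eq_0)
    then show ?thesis
      using poly_roots_unique_if_degree_le_1 \<open>pderiv F \<noteq> 0\<close> assms(5,6) by blast
  next
    case False
    moreover have "lead_coeff F \<noteq> 0"
      using deg leading_coeff_0_iff [of F] by auto
    ultimately show ?thesis
      using cubic_nontrivial_pcompose_eq_self_pderiv [OF deg False \<sigma>] assms(5,6) by simp
  qed
qed

lemma critical_values_subset_singleton:
  assumes "\<And>x y. poly (pderiv (map_poly to_ac f)) x = 0 \<Longrightarrow> poly (pderiv (map_poly to_ac f)) y = 0
    \<Longrightarrow> x = y"
  shows "\<exists>v. critical_values f \<subseteq> {v}"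
  using assms unfolding critical_values_def by blast

lemma exceptional_quartic_char_2:
  fixes f :: "'a::field poly"
  assumes "separable_poly f" and "exceptional f" and "degree f = 4"
  shows "(2 :: 'a) = 0"
proof (rule ccontr)
  assume "(2 :: 'a) \<noteq> 0"
  define \<tau> where "\<tau> = [:2 * root_mean f, -1:]"
  obtain \<sigma> where \<sigma>: "pcompose (map_poly to_ac f) \<sigma> = map_poly to_ac f" "\<sigma> \<noteq> [:0, 1:]"
    using exceptional_nontrivial_pcompose_eq_self [OF assms(2,1)] assms(3) by auto
  have "map_poly to_ac \<tau> = [:2 * root_mean (map_poly to_ac f), -1:]"
    by (simp add: \<tau>_def root_mean_def coeff_map_poly)
  then have "map_poly to_ac (pcompose f \<tau>) = map_poly to_ac f"
    using quartic_nontrivial_pcompose_eq_self_reflection [OF _ _ \<sigma>] assms(3) \<open>(2 :: 'a) \<noteq> 0\<close>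
    by (simp add: map_poly_to_ac_pcompose numeral_alg_closure_eq_0_iff)
  then have "\<tau> = [:0, 1:]"
    using exceptional_pcompose_eq_self [OF assms(2)] by simp
  then have "- 1 = (1 :: 'a)"
    by (simp add: \<tau>_def)
  then have "(2 :: 'a) = 0"
    by (metis add.left_inverse one_add_one)
  then show False
    using \<open>(2 :: 'a) \<noteq> 0\<close> by contradiction
qed

lemma exceptional_quartic_no_critical_values:
  fixes f :: "'a::field poly"
  assumes "separable_poly f" and "exceptional f" and "degree f = 4"
  shows "critical_values f = {}"
proof -
  define F where "F = map_poly to_ac f"
  have deg: "degree F = 4" and "pderiv F \<noteq> 0"
    using separable_poly_imp_pderiv_map_poly_to_ac_neq_0 [OF assms(1)] assms(3) by (simp_all add: F_def)
  obtain \<sigma> where \<sigma>: "pcompose F \<sigma> = F" "\<sigma> \<noteq> [:0, 1:]"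
    using exceptional_nontrivial_pcompose_eq_self [OF assms(2,1)] assms(3) by (auto simp: F_def)
  have "(2 :: 'a alg_closure) = 0"
    using exceptional_quartic_char_2 [OF assms] by (simp add: numeral_alg_closure_eq_0_iff)
  then have "pderiv F = [:coeff F 1:]"
    using quartic_char_2_nontrivial_pcompose_eq_self_pderiv_const [OF deg _ \<sigma>] by simp
  then have "poly (pderiv F) x \<noteq> 0" for x
    using \<open>pderiv F \<noteq> 0\<close> by simp
  then show ?thesis
    by (simp add: critical_values_def F_def)
qed

theorem lemma2p30:
  fixes f :: "'a::{field, finite} poly"
  assumes "separable_poly f"
    and "exceptional f"
  shows "degree f \<noteq> 2
    \<and> (degree f = 3 \<longrightarrow> (\<exists>v. critical_values f \<subseteq> {v}))
    \<and> (degree f = 4 \<longrightarrow> even (card (UNIV :: 'a set)) \<and> critical_values f = {})"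
  using exceptional_degree_ne_2 [OF assms]
    exceptional_cubic_unique_critical_point [OF assms] critical_values_subset_singleton
    exceptional_quartic_char_2 [OF assms] even_card_if_two_eq_0
    exceptional_quartic_no_critical_values [OF assms]
  by blast

end
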